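(* The relation $\equiv_{\mathrm{lps}}$ on $\mathcal{A}^*$ is the smallest congruence on $\mathcal{A}^*$ containing $\mathcal{R}_{\mathrm{lps}}$, and the relation $\equiv_{\mathrm{rps}}$ on $\mathcal{A}^*$ is the smallest congruence on $\mathcal{A}^*$ containing $\mathcal{R}_{\mathrm{rps}}$.
   Context: Let $\mathcal{A}=\{1<2<3<\cdots\}$ be the positive integers viewed as a totally ordered alphabet. An lPS tableau is a finite (possibly empty) sequence of nonempty bottom-justified columns of boxes filled with elements of $\mathcal{A}$, such that the entries of each column are strictly decreasing from top to bottom and the bottom entries of the columns form a weakly increasing sequence from left to right. An rPS tableau is defined in the same way but with columns weakly decreasing from top to bottom and the bottom row strictly increasing from left to right. Right insertion of a symbol $a$ into an lPS tableau $B$: if $a$ is greater than or equal to every entry of the bottom row, append a new column consisting of $a$ at the right end; otherwise, let $z$ be the leftmost bottom-row entry with $z>a$ and put $a$ in a new box at the bottom of the column of $z$ (the previous entries of that column move up one box). Right insertion into an rPS tableau is the same except that a new column is created iff $a$ is strictly greater than every bottom-row entry, and otherwise $z$ is the leftmost bottom-row entry with $z\geq a$. For a word $w=w_1\cdots w_k$, $\mathfrak{R}_\ell(w)$ (resp. $\mathfrak{R}_r(w)$) is obtained by starting with the empty lPS (resp. rPS) tableau and right-inserting $w_1,\dots,w_k$ in order. Define $u\equiv_{\mathrm{lps}}v\iff\mathfrak{R}_\ell(u)=\mathfrak{R}_\ell(v)$ and $u\equiv_{\mathrm{rps}}v\iff\mathfrak{R}_r(u)=\mathfrak{R}_r(v)$.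 $\mathcal{R}_{\mathrm{lps}}=\{(yux,yxu): m\geq1,\ x,y,u_1,\dots,u_m\in\mathcal{A},\ u=u_m\cdots u_1,\ x<y\leq u_1<\cdots<u_m\}$ and $\mathcal{R}_{\mathrm{rps}}=\{(yux,yxu): m\geq1,\ x,y,u_1,\dots,u_m\in\mathcal{A},\ u=u_m\cdots u_1,\ x\leq y<u_1\leq\cdots\leq u_m\}$. *)

theory Defs
  imports Main
begin

text \<open>A PS tableau is a list of columns (left to right); each
  column is stored bottom-first, so its head is the bottom-row entry.\<close>

definition words :: "nat list set" where
  "words = {w. \<forall>a\<in>set w. 0 < a}"

fun lins :: "nat list list \<Rightarrow> nat \<Rightarrow> nat list list" where
  "lins [] a = [[a]]"
| "lins (c # cs) a = (if a < hd c then (a # c) # cs else c # lins cs a)"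

fun rins :: "nat list list \<Rightarrow> nat \<Rightarrow> nat list list" where
  "rins [] a = [[a]]"
| "rins (c # cs) a = (if a \<le> hd c then (a # c) # cs else c # rins cs a)"

definition R_l :: "nat list \<Rightarrow> nat list list" where
  "R_l w = foldl lins [] w"

definition R_r :: "nat list \<Rightarrow> nat list list" where
  "R_r w = foldl rins [] w"

definition lps_equiv :: "nat list \<Rightarrow> nat list \<Rightarrow> bool" where
  "lps_equiv u v \<longleftrightarrow> R_l u = R_l v"

definition rps_equiv :: "nat list \<Rightarrow> nat list \<Rightarrow> bool" where
  "rps_equiv u v \<longleftrightarrow> R_r u = R_r v"

text \<open>v = [u_1, ..., u_m], u = u_m ... u_1 = rev v.\<close>
definition R_lps :: "(nat list \<times> nat list) set" where
  "R_lps = {([y] @ rev v @ [x], [y, x] @ rev v) | x y v.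
      v \<noteq> [] \<and> 0 < x \<and> x < y \<and> y \<le> hd v \<and> sorted_wrt (<) v}"

definition R_rps :: "(nat list \<times> nat list) set" where
  "R_rps = {([y] @ rev v @ [x], [y, x] @ rev v) | x y v.
      v \<noteq> [] \<and> 0 < x \<and> x \<le> y \<and> y < hd v \<and> sorted_wrt (\<le>) v}"

definition is_congruence :: "(nat list \<times> nat list) set \<Rightarrow> bool" where
  "is_congruence \<rho> \<longleftrightarrow> \<rho> \<subseteq> words \<times> words \<and> equiv words \<rho> \<and>
     (\<forall>u v s t. (u, v) \<in> \<rho> \<longrightarrow> s \<in> words \<longrightarrow> t \<in> words \<longrightarrow> (s @ u @ t, s @ v @ t) \<in> \<rho>)"

definition least_congruence :: "(nat list \<times> nat list) set \<Rightarrow> (nat list \<times> nat list) set" where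
  "least_congruence R = \<Inter> {\<rho>. is_congruence \<rho> \<and> R \<subseteq> \<rho>}"

end

theory Submission
  imports Defs
begin

text \<open>Both relations act trivially on every tableau: in \<open>y u x\<close> the letter \<open>x\<close> is inserted
  at the bottom of the column that \<open>y\<close> has just reached, and the letters of \<open>u\<close>, all at
  least \<open>y\<close>, only touch columns to the right of it. Hence the kernel of insertion is a
  congruence containing the relations. Conversely, appending a letter to the column reading
  of a tableau and moving it leftwards into its column uses only the defining relations, so
  every word is congruent to the reading of its tableau.

  The two cases differ only in the test deciding whether a letter is bumped under a column;
  the argument works for any test lying between \<open><\<close> and \<open>\<le>\<close>.\<close>

lemma least_congruence_iff:
  "p \<in> least_congruence R \<longleftrightarrow> (\<forall>\<rho>. is_congruence \<rho> \<and> R \<subseteq> \<rho> \<longrightarrow> p \<in> \<rho>)"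
  by (auto simp: least_congruence_def)

lemma least_congruence_least: "is_congruence \<rho> \<Longrightarrow> R \<subseteq> \<rho> \<Longrightarrow> least_congruence R \<subseteq> \<rho>"
  by (auto simp: least_congruence_iff)

lemma least_congruence_base: "p \<in> R \<Longrightarrow> p \<in> least_congruence R"
  by (auto simp: least_congruence_iff)

lemma least_congruence_refl: "u \<in> words \<Longrightarrow> (u, u) \<in> least_congruence R"
  unfolding least_congruence_iff is_congruence_def equiv_def refl_on_def by simp

lemma least_congruence_sym:
  "(u, v) \<in> least_congruence R \<Longrightarrow> (v, u) \<in> least_congruence R"
  unfolding least_congruence_iff is_congruence_def equiv_def by (meson symD)

lemma least_congruence_trans:
  "(u, v) \<in> least_congruence R \<Longrightarrow> (v, w) \<in> least_congruence R \<Longrightarrow> (u, w) \<in> least_congruence R"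
  unfolding least_congruence_iff is_congruence_def equiv_def by (meson transD)

lemma least_congruence_context:
  "(u, v) \<in> least_congruence R \<Longrightarrow> s \<in> words \<Longrightarrow> t \<in> words
    \<Longrightarrow> (s @ u @ t, s @ v @ t) \<in> least_congruence R"
  unfolding least_congruence_iff is_congruence_def by simp

lemma is_congruence_foldl_kernel:
  "is_congruence {(u, v). u \<in> words \<and> v \<in> words \<and> (\<forall>T. foldl f T u = foldl f T v)}"
  unfolding is_congruence_def equiv_def refl_on_def sym_def trans_def
  by (auto simp: words_def)

fun ps_insert :: "(nat \<Rightarrow> nat \<Rightarrow> bool) \<Rightarrow> nat list list \<Rightarrow> nat \<Rightarrow> nat list list" where
  "ps_insert bump [] a = [[a]]"
| "ps_insert bump (c # cs) a = (if bump a (hd c) then (a # c) # cs else c # ps_insert bump cs a)"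

definition ps_relations :: "(nat \<Rightarrow> nat \<Rightarrow> bool) \<Rightarrow> (nat list \<times> nat list) set" where
  "ps_relations bump = {([y] @ rev v @ [x], [y, x] @ rev v) | x y v.
      v \<noteq> [] \<and> 0 < x \<and> bump x y \<and> \<not> bump (hd v) y \<and> sorted_wrt bump v}"

text \<open>Columns are stored bottom entry first, and read top to bottom, left to right.\<close>
definition reading :: "nat list list \<Rightarrow> nat list" where
  "reading T = concat (map rev T)"

lemma lins_eq_ps_insert: "lins = ps_insert (<)"
proof (intro ext)
  show "lins T a = ps_insert (<) T a" for T a by (induction T) auto
qed

lemma rins_eq_ps_insert: "rins = ps_insert (\<le>)"
proof (intro ext)
  show "rins T a = ps_insert (\<le>) T a" for T a by (induction T) auto
qed

lemma R_lps_eq_ps_relations: "R_lps = ps_relations (<)"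
  unfolding R_lps_def ps_relations_def by (simp add: not_less)

lemma R_rps_eq_ps_relations: "R_rps = ps_relations (\<le>)"
  unfolding R_rps_def ps_relations_def by (simp add: not_le)

locale ps_insertion =
  fixes bump :: "nat \<Rightarrow> nat \<Rightarrow> bool"
  assumes less_imp_bump: "a < b \<Longrightarrow> bump a b"
    and bump_imp_le: "bump a b \<Longrightarrow> a \<le> b"
begin

abbreviation ins :: "nat list list \<Rightarrow> nat \<Rightarrow> nat list list" where
  "ins \<equiv> ps_insert bump"

lemma bump_le_trans: "bump a b \<Longrightarrow> b \<le> c \<Longrightarrow> bump a c"
  by (metis bump_imp_le le_less_trans le_neq_implies_less less_imp_bump)

lemma not_bump_imp_le: "\<not> bump a b \<Longrightarrow> b \<le> a"
  by (meson less_imp_bump not_le)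

lemma le_bump_trans: "a \<le> b \<Longrightarrow> bump b c \<Longrightarrow> bump a c"
  by (metis bump_imp_le le_less_trans le_neq_implies_less less_imp_bump)

lemma bump_trans: "bump a b \<Longrightarrow> bump b c \<Longrightarrow> bump a c"
  by (metis bump_imp_le bump_le_trans)

lemma sorted_wrt_bump_hd: "sorted_wrt bump c \<Longrightarrow> z \<in> set c \<Longrightarrow> z = hd c \<or> bump (hd c) z"
  by (cases c) auto

lemma ins_append_skip: "\<forall>c\<in>set A. \<not> bump a (hd c) \<Longrightarrow> ins (A @ B) a = A @ ins B a"
  by (induction A) auto

lemma ins_append_bump: "bump a (hd D) \<Longrightarrow> ins (A @ D # B) a = ins (A @ [D]) a @ B"
  by (induction A) auto

lemma foldl_ins_append_skip:
  "\<forall>c\<in>set A. \<forall>a\<in>set us. \<not> bump a (hd c) \<Longrightarrow> foldl ins (A @ B) us = A @ foldl ins B us"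
  by (induction us arbitrary: B) (auto simp: ins_append_skip)

lemma ins_decompose: "\<exists>A D B. ins T y = A @ D # B \<and> hd D = y \<and> (\<forall>c\<in>set A. \<not> bump y (hd c))"
proof (induction T)
  case Nil
  show ?case by (intro exI[of _ "[]"] exI[of _ "[y]"]) simp
next
  case (Cons c cs)
  show ?case
  proof (cases "bump y (hd c)")
    case True
    then show ?thesis by (intro exI[of _ "[]"] exI[of _ "y # c"] exI[of _ cs]) simp
  next
    case False
    from Cons obtain A D B where "ins cs y = A @ D # B" "hd D = y" "\<forall>c\<in>set A. \<not> bump y (hd c)"
      by blast
    with False show ?thesis by (intro exI[of _ "c # A"] exI[of _ D] exI[of _ B]) auto
  qed
qed

lemma ins_heads_le:
  "\<forall>c\<in>set A. \<not> bump y (hd c) \<Longrightarrow> hd D = y \<Longrightarrow> bump x y \<Longrightarrow> \<forall>c\<in>set (ins (A @ [D]) x). hd c \<le> y"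
  by (induction A) (auto simp: bump_imp_le not_bump_imp_le)

lemma foldl_ins_commute:
  assumes xy: "bump x y" and yu: "\<forall>u\<in>set us. \<not> bump u y"
  shows "foldl ins T (y # us @ [x]) = foldl ins T (y # x # us)"
proof -
  obtain A D B where ADB: "ins T y = A @ D # B" and hD: "hd D = y"
    and hA: "\<forall>c\<in>set A. \<not> bump y (hd c)"
    using ins_decompose by blast
  have skip_us: "\<forall>c\<in>set C. \<forall>a\<in>set us. \<not> bump a (hd c)" if "\<forall>c\<in>set C. hd c \<le> y" for C
  proof (intro ballI notI)
    fix c a assume "c \<in> set C" "a \<in> set us" "bump a (hd c)"
    with that yu show False using bump_le_trans by blast
  qed
  have "\<forall>c\<in>set (A @ [D]). hd c \<le> y"
    using hA hD not_bump_imp_le by auto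
  then have before: "\<forall>c\<in>set (A @ [D]). \<forall>a\<in>set us. \<not> bump a (hd c)"
    by (rule skip_us)
  have after: "\<forall>c\<in>set (ins (A @ [D]) x). \<forall>a\<in>set us. \<not> bump a (hd c)"
    using skip_us[OF ins_heads_le[OF hA hD xy]] .
  have xD: "bump x (hd D)" using hD xy by simp
  have "foldl ins T (y # us @ [x]) = ins (foldl ins (A @ D # B) us) x"
    by (simp only: foldl_Cons foldl_append foldl_Nil ADB)
  also have "\<dots> = ins (A @ D # foldl ins B us) x"
    using foldl_ins_append_skip[OF before, of B] by simp
  also have "\<dots> = foldl ins (ins (A @ D # B) x) us"
    unfolding ins_append_bump[OF xD, of A B] ins_append_bump[OF xD, of A "foldl ins B us"]
      foldl_ins_append_skip[OF after] ..
  also have "\<dots> = foldl ins T (y # x # us)"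
    by (simp only: foldl_Cons ADB)
  finally show ?thesis .
qed

lemma ps_relations_subset_foldl_kernel:
  "ps_relations bump \<subseteq> {(u, v). u \<in> words \<and> v \<in> words \<and> (\<forall>T. foldl ins T u = foldl ins T v)}"
proof
  fix p assume "p \<in> ps_relations bump"
  then obtain x y v where p: "p = ([y] @ rev v @ [x], [y, x] @ rev v)"
    and v: "v \<noteq> []" "0 < x" "bump x y" "\<not> bump (hd v) y" "sorted_wrt bump v"
    unfolding ps_relations_def by blast
  have yv: "\<forall>u\<in>set v. \<not> bump u y \<and> y \<le> u"
  proof
    fix u assume "u \<in> set v"
    then have "hd v \<le> u" using sorted_wrt_bump_hd[OF v(5)] bump_imp_le by fastforce
    then have "\<not> bump u y" using v(4) le_bump_trans[of "hd v" u y] by blast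
    then show "\<not> bump u y \<and> y \<le> u" by (simp add: not_bump_imp_le)
  qed
  have "0 < y" using v(2,3) bump_imp_le by fastforce
  with v(2) yv have "[y] @ rev v @ [x] \<in> words" "[y, x] @ rev v \<in> words"
    by (auto simp: words_def)
  moreover have "\<forall>T. foldl ins T (y # rev v @ [x]) = foldl ins T (y # x # rev v)"
    using foldl_ins_commute[OF v(3)] yv by simp
  ultimately show "p \<in> {(u, v). u \<in> words \<and> v \<in> words \<and> (\<forall>T. foldl ins T u = foldl ins T v)}"
    unfolding p by simp
qed

definition ps_tableau :: "nat list list \<Rightarrow> bool" where
  "ps_tableau T \<longleftrightarrow> (\<forall>c\<in>set T. c \<noteq> [] \<and> c \<in> words \<and> sorted_wrt bump c)
     \<and> sorted_wrt (\<lambda>a b. \<not> bump b a) (map hd T)"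

lemma ins_heads: "hd ` set (ins T a) \<subseteq> insert a (hd ` set T)"
  by (induction T) auto

lemma ps_tableau_ins: "ps_tableau T \<Longrightarrow> 0 < a \<Longrightarrow> ps_tableau (ins T a)"
proof (induction T)
  case Nil
  then show ?case by (simp add: ps_tableau_def words_def)
next
  case (Cons c cs)
  show ?case
  proof (cases "bump a (hd c)")
    case True
    have c: "c \<noteq> []" "c \<in> words" "sorted_wrt bump c" and a_c: "a \<le> hd c"
      using Cons.prems True bump_imp_le by (auto simp: ps_tableau_def)
    have "\<forall>z\<in>set c. bump a z"
      using sorted_wrt_bump_hd[OF c(3)] True bump_trans by metis
    moreover have "\<forall>d\<in>set cs. \<not> bump (hd d) a"
      using Cons.prems(1) a_c bump_le_trans by (fastforce simp: ps_tableau_def)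
    moreover have "\<forall>d\<in>set cs. d \<noteq> [] \<and> d \<in> words \<and> sorted_wrt bump d"
      "sorted_wrt (\<lambda>a b. \<not> bump b a) (map hd cs)"
      using Cons.prems(1) by (simp_all add: ps_tableau_def)
    ultimately show ?thesis
      using True c Cons.prems(2) by (simp add: ps_tableau_def words_def)
  next
    case False
    have "ps_tableau cs" using Cons.prems(1) by (simp add: ps_tableau_def)
    then have "ps_tableau (ins cs a)" using Cons.IH Cons.prems(2) by blast
    moreover have "\<forall>d\<in>set (ins cs a). \<not> bump (hd d) (hd c)"
      using ins_heads[of cs a] False Cons.prems(1) by (fastforce simp: ps_tableau_def)
    ultimately show ?thesis using False Cons.prems(1) by (auto simp: ps_tableau_def)
  qed
qed

lemma ps_tableau_foldl_ins: "w \<in> words \<Longrightarrow> ps_tableau (foldl ins [] w)"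
proof (induction w rule: rev_induct)
  case Nil
  then show ?case by (simp add: ps_tableau_def)
next
  case (snoc a w)
  then show ?case by (simp add: words_def ps_tableau_ins)
qed

lemma reading_in_words: "\<forall>c\<in>set T. c \<in> words \<Longrightarrow> reading T \<in> words"
  by (auto simp: reading_def words_def)

lemma move_past_reading:
  assumes "\<forall>c\<in>set Cs. c \<noteq> [] \<and> c \<in> words \<and> sorted_wrt bump c"
    and "sorted_wrt (\<lambda>a b. \<not> bump b a) (y # map hd Cs)" and "bump a y" and "0 < a"
  shows "([y] @ reading Cs @ [a], [y, a] @ reading Cs) \<in> least_congruence (ps_relations bump)"
  using assms
proof (induction Cs arbitrary: y)
  case Nil
  have "0 < y" using Nil.prems(3,4) bump_imp_le by fastforce
  with Nil.prems show ?case by (auto intro!: least_congruence_refl simp: reading_def words_def)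
next
  case (Cons c Ds)
  obtain b cs where c: "c = b # cs" using Cons.prems(1) by (cases c) auto
  have "\<not> bump b y" using Cons.prems(2) c by simp
  then have ab: "bump a b" using Cons.prems(3) bump_le_trans not_bump_imp_le by blast
  have IH: "([b] @ reading Ds @ [a], [b, a] @ reading Ds) \<in> least_congruence (ps_relations bump)"
    using Cons.IH[OF _ _ ab Cons.prems(4)] Cons.prems(1,2) c by simp
  have "0 < y" using Cons.prems(3,4) bump_imp_le by fastforce
  with Cons.prems(1) c have y_cs: "[y] @ rev cs \<in> words" by (auto simp: words_def)
  have Ds: "reading Ds \<in> words" using Cons.prems(1) by (simp add: reading_in_words)
  have "([y] @ rev c @ reading Ds @ [a], [y] @ rev c @ [a] @ reading Ds)
      \<in> least_congruence (ps_relations bump)"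
    using least_congruence_context[OF IH y_cs, of "[]"] c by (simp add: words_def)
  moreover have rel: "([y] @ rev c @ [a], [y, a] @ rev c) \<in> ps_relations bump"
  proof -
    have "c \<noteq> []" "0 < a" "bump a y" "\<not> bump (hd c) y" "sorted_wrt bump c"
      using Cons.prems c by auto
    then show ?thesis unfolding ps_relations_def by blast
  qed
  then have "([y] @ rev c @ [a] @ reading Ds, [y, a] @ rev c @ reading Ds)
      \<in> least_congruence (ps_relations bump)"
    using least_congruence_context[OF least_congruence_base[OF rel], of "[]" "reading Ds"] Ds
    by (simp add: words_def)
  ultimately show ?case using least_congruence_trans c by (simp add: reading_def)
qed

lemma reading_snoc_congruent_reading_ins:
  "ps_tableau T \<Longrightarrow> 0 < a \<Longrightarrow> (reading T @ [a], reading (ins T a)) \<in> least_congruence (ps_relations bump)"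
proof (induction T)
  case Nil
  then show ?case by (auto intro!: least_congruence_refl simp: reading_def words_def)
next
  case (Cons c Ds)
  have Ds: "ps_tableau Ds" using Cons.prems by (simp add: ps_tableau_def)
  show ?case
  proof (cases "bump a (hd c)")
    case True
    obtain b cs where c: "c = b # cs" using Cons.prems(1) by (cases c) (auto simp: ps_tableau_def)
    have "([b] @ reading Ds @ [a], [b, a] @ reading Ds) \<in> least_congruence (ps_relations bump)"
      using Cons.prems c True by (intro move_past_reading) (auto simp: ps_tableau_def)
    moreover have "rev cs \<in> words" using Cons.prems c by (auto simp: ps_tableau_def words_def)
    ultimately show ?thesis
      using least_congruence_context[of _ _ _ "rev cs" "[]"] True c by (simp add: reading_def words_def)
  next
    case False
    have "rev c \<in> words" using Cons.prems by (auto simp: ps_tableau_def words_def)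
    then show ?thesis using least_congruence_context[OF Cons.IH[OF Ds Cons.prems(2)], of "rev c" "[]"] False
      by (simp add: reading_def words_def)
  qed
qed

lemma word_congruent_reading:
  "w \<in> words \<Longrightarrow> (w, reading (foldl ins [] w)) \<in> least_congruence (ps_relations bump)"
proof (induction w rule: rev_induct)
  case Nil
  then show ?case by (auto intro!: least_congruence_refl simp: reading_def words_def)
next
  case (snoc a w)
  have w: "w \<in> words" and a: "0 < a" using snoc.prems by (auto simp: words_def)
  have "(w @ [a], reading (foldl ins [] w) @ [a]) \<in> least_congruence (ps_relations bump)"
    using least_congruence_context[OF snoc.IH[OF w], of "[]" "[a]"] a by (simp add: words_def)
  with reading_snoc_congruent_reading_ins[OF ps_tableau_foldl_ins[OF w] a]
  show ?case using least_congruence_trans by simp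
qed

theorem insertion_equiv_eq_least_congruence:
  "{(u, v). u \<in> words \<and> v \<in> words \<and> foldl ins [] u = foldl ins [] v}
    = least_congruence (ps_relations bump)"
proof (intro equalityI subsetI)
  fix p assume "p \<in> {(u, v). u \<in> words \<and> v \<in> words \<and> foldl ins [] u = foldl ins [] v}"
  then obtain u v where p: "p = (u, v)" "u \<in> words" "v \<in> words" "foldl ins [] u = foldl ins [] v"
    by blast
  have "(reading (foldl ins [] u), v) \<in> least_congruence (ps_relations bump)"
    using least_congruence_sym[OF word_congruent_reading[OF p(3)]] p(4) by simp
  then show "p \<in> least_congruence (ps_relations bump)"
    using least_congruence_trans[OF word_congruent_reading[OF p(2)]] p(1) by simp
next
  fix p assume "p \<in> least_congruence (ps_relations bump)"
  then show "p \<in> {(u, v). u \<in> words \<and> v \<in> words \<and> foldl ins [] u = foldl ins [] v}"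
    using least_congruence_least[OF is_congruence_foldl_kernel ps_relations_subset_foldl_kernel]
    by blast
qed

end

interpretation lps: ps_insertion "(<)"
  by unfold_locales auto

interpretation rps: ps_insertion "(\<le>)"
  by unfold_locales auto

theorem theorem3p23:
  shows "{(u, v). u \<in> words \<and> v \<in> words \<and> lps_equiv u v} = least_congruence R_lps
       \<and> {(u, v). u \<in> words \<and> v \<in> words \<and> rps_equiv u v} = least_congruence R_rps"
  using lps.insertion_equiv_eq_least_congruence rps.insertion_equiv_eq_least_congruence
  by (simp add: lps_equiv_def rps_equiv_def R_l_def R_r_def lins_eq_ps_insert rins_eq_ps_insert
      R_lps_eq_ps_relations R_rps_eq_ps_relations)

end
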